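(* Let $\mathbf{d}^m=\{d_1,\ldots,d_m\}$ be positive integers and let $W(s,\mathbf{d}^m)$ be the restricted partition function, defined by $\prod_{i=1}^m \frac{1}{1-t^{d_i}}=\sum_{s\ge 0}W(s,\mathbf{d}^m)t^s$. Then $W(s,\mathbf{d}^m)=\sum_j W_j(s,\mathbf{d}^m)$, the sum running over all distinct positive integers $j$ dividing at least one $d_i$, where the $j$-periodic Sylvester wave is given explicitly by $$ W_j(s,\mathbf{d}^m)=\frac{1}{(m-1)!\,\pi_m\,j^{m-k_j}}\sum_{r_{k_j+1}=0}^{j-1}\cdots\sum_{r_m=0}^{j-1} B^{(m)}_{m-1}\Big(s+s_m+\sum_{i=k_j+1}^{m} d_i r_i\;\Big|\;\mathbf{d}^m_j\Big)\,\bar{\Psi}_j\Big(s+\sum_{i=k_j+1}^{m} d_i (r_i+1)\Big), $$ equivalently $$ W_j(s,\mathbf{d}^m)=\sum_{r_{k_j+1}=0}^{j-1}\cdots\sum_{r_m=0}^{j-1} W_1\Big(s-\sum_{i=k_j+1}^{m} d_i r_i,\;\mathbf{d}^m_j\Big)\,\bar{\Psi}_j\Big(s-\sum_{i=k_j+1}^{m} d_i r_i\Big), $$ with $W_1(s,\mathbf{d}^m)=\frac{1}{(m-1)!\,\pi_m}B^{(m)}_{m-1}(s+s_m\,|\,\mathbf{d}^m)$. Together with the formulas for $\bar{\Psi}_j$ below, this gives a completely explicit solution of the restricted partition problem as a finite sum of higher-order Bernoulli polynomials with periodic coefficients.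
   Context: Notation: $s_m=\sum_{i=1}^m d_i$, $\pi_m=\prod_{i=1}^m d_i$. The elements of $\mathbf{d}^m$ are ordered so that $j$ divides exactly the first $k_j$ of them, $d_1,\ldots,d_{k_j}$. The $j$-modified set is $\mathbf{d}^m_j=\{d_1,\ldots,d_{k_j}\}\cup\{jd_{k_j+1},\ldots,jd_m\}$. The Bernoulli polynomials of higher order $B^{(m)}_n(s\,|\,\mathbf{d}^m)$ are defined by $\frac{e^{st}t^m\prod_{i=1}^m d_i}{\prod_{i=1}^m(e^{d_it}-1)}=\sum_{n\ge0}B^{(m)}_n(s\,|\,\mathbf{d}^m)\frac{t^n}{n!}$. The prime radical circulator is $\bar{\Psi}_j(s)=\sum_{\rho_j}\rho_j^s$, the sum over primitive $j$-th roots of unity $\rho_j=e^{2\pi i n/j}$, $\gcd(n,j)=1$; for prime $j$, $\bar{\Psi}_j(s)=\phi(j)$ if $s\equiv0 \pmod j$ and $\mu(j)$ otherwise ($\phi$ Euler totient, $\mu$ Möbius function), and for $j=\prod_k p_k^{\alpha_k}$ and integer $s$, $\bar{\Psi}_j(s)=\prod_k p_k^{\alpha_k-1}\bar{\Psi}_{p_k}(s/p_k^{\alpha_k-1})$, with $\bar{\Psi}_p(x)=0$ for non-integer $x$. The Sylvester wave $W_j(s,\mathbf{d}^m)$ is (by Sylvester) the coefficient of $t^{-1}$ in the expansion of $\sum_{\rho_j}\frac{\rho_j^{-s}e^{st}}{\prod_{k=1}^m(1-\rho_j^{d_k}e^{-d_kt})}$. *)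

theory Defs
  imports "HOL-Complex_Analysis.Complex_Analysis" "HOL-Computational_Algebra.Formal_Power_Series"
begin

text \<open>The multiset d^m is represented by a function d :: nat => nat, restricted to indices i < m.\<close>

definition restricted_partition :: "(nat \<Rightarrow> nat) \<Rightarrow> nat \<Rightarrow> nat \<Rightarrow> complex" where
  "restricted_partition d m s =
     fps_nth (\<Prod>i<m. inverse (1 - fps_X ^ d i)) s"

text \<open>Higher-order Bernoulli polynomial B^(m)_n(x | d^m), via its generating function
  e^(xt) t^m prod d_i / prod (e^(d_i t) - 1) = e^(xt) * prod_i d_i / ((e^(d_i t) - 1)/t),
  where (e^(d t) - 1)/t is the formal power series fps_shift 1 (fps_exp d - 1).\<close>
definition bernoulli_higher :: "nat \<Rightarrow> real \<Rightarrow> (nat \<Rightarrow> nat) \<Rightarrow> nat \<Rightarrow> real" where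
  "bernoulli_higher n x d m =
     fact n * fps_nth (fps_exp x *
        (\<Prod>i<m. fps_const (real (d i)) * inverse (fps_shift 1 (fps_exp (real (d i)) - 1)))) n"

definition sum_d :: "(nat \<Rightarrow> nat) \<Rightarrow> nat \<Rightarrow> nat" where
  "sum_d d m = (\<Sum>i<m. d i)"

definition prod_d :: "(nat \<Rightarrow> nat) \<Rightarrow> nat \<Rightarrow> nat" where
  "prod_d d m = (\<Prod>i<m. d i)"

definition root_unity :: "nat \<Rightarrow> nat \<Rightarrow> complex" where
  "root_unity j n = exp (2 * of_real pi * \<i> * of_nat n / of_nat j)"

definition prim_idx :: "nat \<Rightarrow> nat set" where
  "prim_idx j = {n. n < j \<and> coprime n j}"

definition prime_radical_circulator :: "nat \<Rightarrow> int \<Rightarrow> complex" where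
  "prime_radical_circulator j s = (\<Sum>n\<in>prim_idx j. root_unity j n powi s)"

definition sylvester_wave :: "nat \<Rightarrow> int \<Rightarrow> (nat \<Rightarrow> nat) \<Rightarrow> nat \<Rightarrow> complex" where
  "sylvester_wave j s d m =
     residue (\<lambda>t. \<Sum>n\<in>prim_idx j. root_unity j n powi (- s) * exp (of_int s * t) /
                     (\<Prod>k<m. 1 - root_unity j n ^ d k * exp (- of_nat (d k) * t))) 0"

text \<open>Indices i < m with j not dividing d_i (i.e. the indices k_j+1..m after reordering).\<close>
definition nondiv_idx :: "nat \<Rightarrow> (nat \<Rightarrow> nat) \<Rightarrow> nat \<Rightarrow> nat set" where
  "nondiv_idx j d m = {i. i < m \<and> \<not> j dvd d i}"

definition modified_set :: "nat \<Rightarrow> (nat \<Rightarrow> nat) \<Rightarrow> nat \<Rightarrow> nat" where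
  "modified_set j d i = (if j dvd d i then d i else j * d i)"

definition W1 :: "real \<Rightarrow> (nat \<Rightarrow> nat) \<Rightarrow> nat \<Rightarrow> real" where
  "W1 s d m = bernoulli_higher (m - 1) (s + real (sum_d d m)) d m /
               (fact (m - 1) * real (prod_d d m))"

definition wave_indices :: "(nat \<Rightarrow> nat) \<Rightarrow> nat \<Rightarrow> nat set" where
  "wave_indices d m = {j. j > 0 \<and> (\<exists>i<m. j dvd d i)}"

definition wave_formula1 :: "nat \<Rightarrow> int \<Rightarrow> (nat \<Rightarrow> nat) \<Rightarrow> nat \<Rightarrow> complex" where
  "wave_formula1 j s d m =
     (let N = nondiv_idx j d m in
      1 / (of_real (fact (m - 1)) * of_nat (prod_d d m) * of_nat j ^ card N) *
      (\<Sum>r\<in>PiE N (\<lambda>_. {0..<j}).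
         of_real (bernoulli_higher (m - 1)
                    (real_of_int s + real (sum_d d m) + real (\<Sum>i\<in>N. d i * r i))
                    (modified_set j d) m) *
         prime_radical_circulator j (s + int (\<Sum>i\<in>N. d i * (r i + 1)))))"

definition wave_formula2 :: "nat \<Rightarrow> int \<Rightarrow> (nat \<Rightarrow> nat) \<Rightarrow> nat \<Rightarrow> complex" where
  "wave_formula2 j s d m =
     (let N = nondiv_idx j d m in
      (\<Sum>r\<in>PiE N (\<lambda>_. {0..<j}).
         of_real (W1 (real_of_int (s - int (\<Sum>i\<in>N. d i * r i))) (modified_set j d) m) *
         prime_radical_circulator j (s - int (\<Sum>i\<in>N. d i * r i))))"

end

(*
  W(s, d) is the residue at 0 of f(z) = z^(-s-1) prod_k 1 / (1 - z^(d_k)). The other poles of f are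
  the primitive j-th roots of unity for the j dividing some d_k, and f(z) = O(|z|^-2), so all
  residues add up to zero. The substitution z = rho e^(-t) turns the residue of f at a primitive
  j-th root rho into minus the residue at t = 0 of rho^(-s) e^(st) / prod_k (1 - rho^(d_k) e^(-d_k t));
  summed over rho this is -W_j(s, d).

  For the explicit formulas, each factor with j not dividing d_k is split as
  1 / (1 - x) = (sum_(r<j) x^r) / (1 - x^j), where x^j = e^(-j d_k t) because rho^j = 1. What remains
  is rho^(-(s - sum d_k r_k)) times e^((s - sum d_k r_k) t) / prod_k (1 - e^(-d'_k t)) for the
  j-modified set d', whose residue is W_1; the sum over rho gives Psi_j, which is invariant under
  rho -> 1 / rho. The first formula is the second one after the reflection r_k -> j - 1 - r_k,
  using that Psi_j has period j.
*)

theory Submission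
  imports Defs "HOL-Real_Asymp.Real_Asymp"
begin

section \<open>Residues under a change of variables\<close>

lemma fls_residue_inverse_power_times_deriv:
  fixes G :: "'a::field_char_0 fls"
  assumes "fls_subdegree G = 1" and "k > 0"
  shows "fls_residue (inverse (G ^ k) * fls_deriv G) = (if k = 1 then 1 else 0)"
proof (cases "k = 1")
  case True
  then show ?thesis using fls_residue_deriv_times_inverse_eq_subdegree(2)[of G] assms(1) by simp
next
  case False
  then obtain i where k: "k = Suc (Suc i)" using assms(2) by (cases k; cases "k - 1") auto
  have G0: "G \<noteq> 0" using assms(1) by auto
  define A where "A = G ^ Suc i"
  have "(inverse A)\<^sup>2 = inverse (G ^ i) * inverse (G ^ k)"
    unfolding A_def k
    by (simp add: power2_eq_square power_inverse[symmetric] inverse_mult_distrib[symmetric]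
        power_add[symmetric])
  then have "G ^ i * (inverse A)\<^sup>2 = inverse (G ^ k)"
    using G0 by (simp add: mult.assoc[symmetric])
  moreover have "fls_deriv (inverse A) = - fls_deriv A * (inverse A)\<^sup>2"
    by (rule fls_inverse_deriv)
  moreover have "fls_deriv A = of_nat (Suc i) * G ^ i * fls_deriv G"
    unfolding A_def by (subst fls_deriv_power) simp
  ultimately have "fls_deriv (inverse A) = - of_nat (Suc i) * (inverse (G ^ k) * fls_deriv G)"
    by (simp add: algebra_simps del: of_nat_Suc)
  \<comment> \<open>for k \<ge> 2 the integrand is an exact derivative\<close>
  then have "inverse (G ^ k) * fls_deriv G = fls_const (- 1 / of_nat (Suc i)) * fls_deriv (inverse A)"
    by (simp add: fls_of_nat fls_const_mult_const[symmetric] del: of_nat_Suc)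
  then show ?thesis using False by (simp only: fls_residue_fls_const_times fls_residue_deriv) simp
qed

lemma fls_residue_compose_fps_times_deriv:
  fixes F :: "'a::field_char_0 fls" and G :: "'a fps"
  assumes G0: "G $ 0 = 0" and G1: "G $ 1 \<noteq> 0"
  shows "fls_residue (fls_compose_fps F G * fps_to_fls (fps_deriv G)) = fls_residue F"
proof (induction "nat (- fls_subdegree F)" arbitrary: F rule: less_induct)
  case less
  have Gnz: "G \<noteq> 0" using G1 by auto
  have "subdegree G = 1" using G0 G1 by (intro subdegreeI) auto
  then have sdG: "fls_subdegree (fps_to_fls G) = 1" by (simp add: fls_subdegree_fls_to_fps)
  have dG: "fps_to_fls (fps_deriv G) = fls_deriv (fps_to_fls G)" by (simp add: fls_deriv_fps_to_fls)
  show ?case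
  proof (cases "fls_subdegree F \<ge> 0")
    case True
    then have F: "F = fps_to_fls (fls_regpart F)" by (simp add: fls_regpart_to_fls_trivial)
    have "fls_compose_fps F G * fps_to_fls (fps_deriv G) = fps_to_fls ((fls_regpart F oo G) * fps_deriv G)"
      by (subst F) (simp add: fls_compose_fps_to_fls Gnz G0 fls_times_fps_to_fls)
    moreover have "fls_residue F = 0" using True by (simp add: fls_eq0_below_subdegree)
    ultimately show ?thesis by simp
  next
    case False
    \<comment> \<open>split off the leading term c X^-k and induct on the pole order k\<close>
    define k where "k = nat (- fls_subdegree F)"
    have k: "k > 0" "fls_subdegree F = - int k" using False unfolding k_def by auto
    define c where "c = fls_nth F (- int k)"
    define F' where "F' = F - fls_const c * fls_X_inv ^ k"
    have "nat (- fls_subdegree F') < k"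
    proof (cases "F' = 0")
      case False
      have "- int k < fls_subdegree F'"
      proof (rule fls_subdegree_greaterI[OF False])
        fix i :: int assume "i \<le> - int k"
        then show "fls_nth F' i = 0" using k
          by (cases "i = - int k") (auto simp: F'_def c_def fls_X_inv_power_nth fls_eq0_below_subdegree)
      qed
      then show ?thesis using k by linarith
    qed (use k in simp)
    then have IH: "fls_residue (fls_compose_fps F' G * fps_to_fls (fps_deriv G)) = fls_residue F'"
      using less.hyps k_def by blast
    have "fls_compose_fps (fls_const c * fls_X_inv ^ k) G = fls_const c * inverse (fps_to_fls G ^ k)"
      by (simp add: fls_compose_fps_mult fls_compose_fps_power fls_compose_fps_inverse
            fls_inverse_X[symmetric] Gnz G0 power_inverse)
    then have r1: "fls_residue (fls_compose_fps (fls_const c * fls_X_inv ^ k) G * fps_to_fls (fps_deriv G))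
              = c * (if k = 1 then 1 else 0)"
      using fls_residue_inverse_power_times_deriv[OF sdG k(1)]
      by (simp only: dG mult.assoc fls_residue_fls_const_times)
    have r2: "fls_residue (fls_const c * fls_X_inv ^ k) = c * (if k = 1 then 1 else 0)"
      by (simp only: fls_residue_fls_const_times) (simp add: fls_X_inv_power_nth)
    have "F = F' + fls_const c * fls_X_inv ^ k" unfolding F'_def by simp
    then show ?thesis
      by (simp only: fls_compose_fps_add[OF Gnz G0] distrib_right fls_residue_add IH r1 r2)
  qed
qed

lemma residue_substitution:
  fixes f g g' :: "complex \<Rightarrow> complex" and G :: "complex fps"
  assumes F: "(\<lambda>x. f (z + x)) has_laurent_expansion F"
    and G: "g has_fps_expansion G" "G $ 0 = 0" "G $ 1 \<noteq> 0"
    and G': "g' has_fps_expansion fps_deriv G"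
  shows "residue (\<lambda>t. f (z + g t) * g' t) 0 = residue f z"
proof -
  have "G \<noteq> 0" using G(3) by auto
  then have "((\<lambda>x. f (z + x)) \<circ> g) has_laurent_expansion fls_compose_fps F G"
    by (intro has_laurent_expansion_compose[OF F has_laurent_expansion_fps[OF G(1)] G(2)])
  from has_laurent_expansion_mult[OF this has_laurent_expansion_fps[OF G']]
  have "(\<lambda>t. f (z + g t) * g' t) has_laurent_expansion fls_compose_fps F G * fps_to_fls (fps_deriv G)"
    by (simp add: o_def)
  then show ?thesis
    using has_laurent_expansion_residue_0 fls_residue_compose_fps_times_deriv[OF G(2,3)]
          has_laurent_expansion_residue[OF F] by simp
qed

lemma sum_residues_eq_0_if_decay:
  fixes f :: "complex \<Rightarrow> complex"
  assumes fin: "finite pts" and holo: "f holomorphic_on UNIV - pts"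
    and pts: "pts \<subseteq> ball 0 R"
    and decay: "\<And>z. norm z \<ge> R \<Longrightarrow> norm (f z) \<le> C / norm z ^ 2"
  shows "(\<Sum>p\<in>pts. residue f p) = 0"
proof -
  define S where "S = (\<Sum>p\<in>pts. residue f p)"
  have "norm S \<le> C / r" if r: "r \<ge> max R 1" for r
  proof -
    have img: "path_image (circlepath 0 r) \<subseteq> UNIV - pts"
      using pts r by (auto simp: path_image_circlepath)
    have "(f has_contour_integral contour_integral (circlepath 0 r) f) (circlepath 0 r)"
      using fin img by (intro has_contour_integral_integral contour_integrable_holomorphic_simple[OF holo])
        (auto intro: finite_imp_closed)
    also have "contour_integral (circlepath 0 r) f =
            2 * pi * \<i> * (\<Sum>p\<in>pts. winding_number (circlepath 0 r) p * residue f p)"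
      using img by (intro Residue_theorem[OF open_UNIV connected_UNIV fin holo]) auto
    also have "(\<Sum>p\<in>pts. winding_number (circlepath 0 r) p * residue f p) = S"
      unfolding S_def using pts r by (intro sum.cong refl) (auto simp: winding_number_circlepath)
    finally have "(f has_contour_integral 2 * pi * \<i> * S) (circlepath 0 r)" .
    moreover have "0 \<le> C / r\<^sup>2"
      using decay[of "of_real r"] r norm_ge_zero[of "f (of_real r)"] by (simp del: norm_ge_zero)
    ultimately have "norm (2 * pi * \<i> * S) \<le> C / r\<^sup>2 * (2 * pi * r)"
      using r decay by (intro has_contour_integral_bound_circlepath) auto
    then show ?thesis using r by (simp add: norm_mult power2_eq_square field_simps)
  qed
  moreover have "((\<lambda>r. C / r) \<longlongrightarrow> 0) at_top" by real_asymp
  ultimately have "norm S \<le> 0"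
    by (intro tendsto_lowerbound[of "\<lambda>r. C / r"])
      (auto simp: eventually_at_top_linorder intro!: exI[of _ "max R 1"])
  then show ?thesis by (simp add: S_def)
qed

section \<open>Exponential Laurent series and the residue W_1\<close>

lemma fps_const_prod: "fps_const (\<Prod>i\<in>I. f i) = (\<Prod>i\<in>I. fps_const (f i) :: 'a::comm_ring_1 fps)"
  by (induction I rule: infinite_finite_induct) (auto simp flip: fps_const_mult)

lemma fls_const_prod: "fls_const (\<Prod>i\<in>I. f i) = (\<Prod>i\<in>I. fls_const (f i) :: 'a::comm_ring_1 fls)"
  by (induction I rule: infinite_finite_induct) (auto simp flip: fls_const_mult_const)

lemma fps_to_fls_prod: "fps_to_fls (\<Prod>i\<in>I. f i) = (\<Prod>i\<in>I. fps_to_fls (f i :: 'a::comm_ring_1 fps))"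
  by (induction I rule: infinite_finite_induct) (auto simp: fls_times_fps_to_fls)

lemma fps_exp_sum: "fps_exp (\<Sum>i\<in>I. f i) = (\<Prod>i\<in>I. fps_exp (f i :: 'a::field_char_0))"
  by (induction I rule: infinite_finite_induct) (auto simp: fps_exp_add_mult)

definition fps_of_real :: "real fps \<Rightarrow> 'a::real_algebra_1 fps" where
  "fps_of_real F = Abs_fps (\<lambda>n. of_real (F $ n))"

lemma fps_of_real_nth [simp]: "fps_of_real F $ n = of_real (F $ n)"
  by (simp add: fps_of_real_def)

lemma fps_of_real_mult [simp]: "fps_of_real (A * B) = fps_of_real A * fps_of_real B"
  by (simp add: fps_eq_iff fps_mult_nth)

lemma fps_of_real_one [simp]: "fps_of_real 1 = 1"
  by (simp add: fps_eq_iff)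

lemma fps_of_real_const [simp]: "fps_of_real (fps_const c) = fps_const (of_real c)"
  by (simp add: fps_eq_iff)

lemma fps_of_real_diff [simp]: "fps_of_real (A - B) = fps_of_real A - fps_of_real B"
  by (simp add: fps_eq_iff)

lemma fps_of_real_shift [simp]: "fps_of_real (fps_shift k A) = fps_shift k (fps_of_real A)"
  by (simp add: fps_eq_iff)

lemma fps_of_real_exp [simp]: "fps_of_real (fps_exp x) = (fps_exp (of_real x) :: 'a::real_field fps)"
  by (simp add: fps_eq_iff fps_exp_nth)

lemma fps_of_real_prod [simp]: "fps_of_real (\<Prod>i\<in>I. f i) = (\<Prod>i\<in>I. fps_of_real (f i))"
  by (induction I rule: infinite_finite_induct) auto

lemma fps_of_real_inverse:
  fixes A :: "real fps"
  assumes "A $ 0 \<noteq> 0"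
  shows "fps_of_real (inverse A) = (inverse (fps_of_real A) :: 'a::real_field fps)"
proof -
  have "fps_of_real A * fps_of_real (inverse A) = (1 :: 'a fps)"
    using assms by (simp add: inverse_mult_eq_1' flip: fps_of_real_mult)
  then show ?thesis by (simp add: fps_inverse_unique)
qed

definition fls_exp :: "'a::field_char_0 \<Rightarrow> 'a fls" where
  "fls_exp c = fps_to_fls (fps_exp c)"

lemma fls_exp_add: "fls_exp (a + b) = fls_exp a * fls_exp b"
  by (simp add: fls_exp_def fls_times_fps_to_fls fps_exp_add_mult)

lemma fls_exp_power: "fls_exp a ^ n = fls_exp (of_nat n * a)"
  by (simp add: fls_exp_def fps_to_fls_power[symmetric] fps_exp_power_mult)

lemma fls_exp_zero [simp]: "fls_exp 0 = 1"
  by (simp add: fls_exp_def)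

lemma fls_exp_sum: "fls_exp (\<Sum>i\<in>I. f i) = (\<Prod>i\<in>I. fls_exp (f i))"
  by (induction I rule: infinite_finite_induct) (auto simp: fls_exp_add)

lemma one_minus_fls_exp_nonzero:
  assumes "c \<noteq> 0"
  shows "1 - fls_exp c \<noteq> 0"
proof
  assume "1 - fls_exp c = 0"
  then have "fls_nth (1 - fls_exp c) 1 = 0" by simp
  then show False using assms by (simp add: fls_exp_def)
qed

lemma has_laurent_expansion_exp: "(\<lambda>t. exp (c * t)) has_laurent_expansion fls_exp c"
  unfolding fls_exp_def by (intro has_laurent_expansion_fps has_fps_expansion_exp)

lemma inverse_one_minus_fls_exp_neg:
  fixes c :: "'a::field_char_0"
  assumes "c \<noteq> 0"
  shows "inverse (1 - fls_exp (- c)) =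
           fls_X_inv * fps_to_fls (fps_exp c * inverse (fps_shift 1 (fps_exp c - 1)))"
proof -
  define U where "U = fps_exp (- c) * fps_shift 1 (fps_exp c - 1)"
  have "fps_exp (- c) * fps_exp c = 1"
    by (simp flip: fps_exp_add_mult)
  then have "1 - fps_exp (- c) = fps_exp (- c) * (fps_exp c - 1)"
    by (simp add: algebra_simps)
  also have "fps_exp c - 1 = fps_shift 1 (fps_exp c - 1) * fps_X"
    using assms by (intro fps_shift_times_fps_X[symmetric] subdegree_geI) auto
  finally have "1 - fps_exp (- c) = fps_X * U"
    unfolding U_def by (simp add: mult_ac)
  from arg_cong[OF this, of fps_to_fls]
  have "1 - fls_exp (- c) = fls_X * fps_to_fls U"
    by (simp add: fls_exp_def fls_times_fps_to_fls)
  moreover have "subdegree U = 0"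
    using assms by (simp add: U_def subdegree_eq_0_iff)
  ultimately have "inverse (1 - fls_exp (- c)) = fls_X_inv * fps_to_fls (inverse U)"
    by (simp add: fls_inverse_fps_to_fls fls_inverse_X)
  also have "inverse U = fps_exp c * inverse (fps_shift 1 (fps_exp c - 1))"
    unfolding U_def by (simp add: fps_inverse_mult fps_exp_neg fps_inverse_idempotent)
  finally show ?thesis .
qed

definition wave1_fls :: "real \<Rightarrow> (nat \<Rightarrow> nat) \<Rightarrow> nat \<Rightarrow> complex fls" where
  "wave1_fls y e m = fls_exp (of_real y) * (\<Prod>k<m. inverse (1 - fls_exp (- of_nat (e k))))"

lemma fls_residue_wave1_fls:
  assumes m: "m > 0" and e: "\<And>k. k < m \<Longrightarrow> e k > 0"
  shows "fls_residue (wave1_fls y e m) = of_real (W1 y e m)"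
proof -
  define S where "S k = fps_shift 1 (fps_exp (real (e k)) - 1)" for k
  define P :: "complex fps" where
    "P = fps_exp (of_real (y + real (sum_d e m))) * (\<Prod>k<m. inverse (fps_of_real (S k)))"
  define PR where
    "PR = fps_exp (y + real (sum_d e m)) * (\<Prod>k<m. fps_const (real (e k)) * inverse (S k))"
  \<comment> \<open>each factor is t^-1 e^(e_k t) / ((e^(e_k t) - 1) / t), so the residue is a coefficient of
    the generating function of the higher-order Bernoulli polynomials\<close>
  have "wave1_fls y e m = fps_to_fls (fps_exp (of_real y)) *
          (\<Prod>k<m. fls_X_inv * fps_to_fls (fps_exp (of_nat (e k)) * inverse (fps_of_real (S k))))"
    unfolding wave1_fls_def fls_exp_def[of "of_real y"] S_def
    using e by (intro arg_cong2[where f = "(*)"] prod.cong refl)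
      (simp add: inverse_one_minus_fls_exp_neg)
  also have "\<dots> = fls_X_inv ^ m * fps_to_fls P"
    by (simp add: P_def sum_d_def prod.distrib fls_times_fps_to_fls fps_to_fls_prod fps_exp_sum
        fps_exp_add_mult mult_ac)
  finally have residue_P: "fls_residue (wave1_fls y e m) = P $ (m - 1)"
    using m by (simp add: fls_X_inv_power_times_conv_shift(1) nat_diff_distrib')
  have "fps_of_real PR = fps_const (of_nat (prod_d e m)) * P"
    using e by (simp add: PR_def P_def S_def prod_d_def prod.distrib fps_of_real_inverse
        fps_const_prod mult_ac)
  then have "of_real (PR $ (m - 1)) = of_nat (prod_d e m) * P $ (m - 1)"
    by (metis fps_of_real_nth fps_mult_left_const_nth)
  moreover have "prod_d e m \<noteq> 0" using e by (simp add: prod_d_def)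
  ultimately show ?thesis
    using residue_P by (simp add: W1_def bernoulli_higher_def PR_def S_def field_simps)
qed

section \<open>Roots of unity and the prime radical circulator\<close>

lemma root_unity_nonzero [simp]: "root_unity j n \<noteq> 0"
  by (simp add: root_unity_def)

lemma norm_root_unity [simp]: "norm (root_unity j n) = 1"
proof -
  have "2 * of_real pi * \<i> * of_nat n / of_nat j = \<i> * of_real (2 * pi * n / j)" by simp
  then show ?thesis unfolding root_unity_def by (simp only: norm_exp_i_times)
qed

lemma root_unity_add: "root_unity j (a + b) = root_unity j a * root_unity j b"
  by (simp add: root_unity_def add_divide_distrib distrib_left exp_add)

lemma root_unity_power: "root_unity j n ^ k = root_unity j (n * k)"
  by (simp add: root_unity_def exp_of_nat_mult[symmetric] field_simps)

lemma root_unity_eq_iff: "j > 0 \<Longrightarrow> root_unity j a = root_unity j b \<longleftrightarrow> a mod j = b mod j"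
  unfolding root_unity_def by (rule complex_root_unity_eq) simp

lemma root_unity_eq_1_iff: "j > 0 \<Longrightarrow> root_unity j n = 1 \<longleftrightarrow> j dvd n"
  unfolding root_unity_def by (rule complex_root_unity_eq_1) simp

lemma root_unity_power_self: "j > 0 \<Longrightarrow> root_unity j n ^ j = 1"
  by (simp add: root_unity_power root_unity_eq_1_iff)

lemma root_unity_reflect:
  assumes "j > 0" "n < j"
  shows "root_unity j ((j - n) mod j) = inverse (root_unity j n)"
proof -
  have "root_unity j ((j - n) mod j) * root_unity j n = root_unity j (j - n + n)"
    using assms(1) by (simp add: root_unity_add root_unity_eq_iff mod_add_left_eq)
  also have "\<dots> = 1" using assms by (simp add: root_unity_eq_1_iff)
  finally show ?thesis by (simp add: field_simps)
qed

lemma prim_idx_reflect: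
  assumes "n \<in> prim_idx j"
  shows "(j - n) mod j \<in> prim_idx j" "(j - (j - n) mod j) mod j = n"
proof -
  have n: "n < j" "coprime n j" using assms unfolding prim_idx_def by auto
  then show "(j - (j - n) mod j) mod j = n"
    by (cases "n = 0") (simp_all add: mod_if)
  have "coprime (j - n) j" using n by (simp add: coprime_iff_gcd_eq_1 gcd_diff2_nat)
  then show "(j - n) mod j \<in> prim_idx j"
    using n unfolding prim_idx_def by (simp add: coprime_mod_left_iff)
qed

lemma prime_radical_circulator_uminus:
  assumes "j > 0"
  shows "prime_radical_circulator j (- y) = prime_radical_circulator j y"
  unfolding prime_radical_circulator_def
proof (rule sum.reindex_bij_witness[of _ "\<lambda>n. (j - n) mod j" "\<lambda>n. (j - n) mod j"])
  fix n assume n: "n \<in> prim_idx j"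
  show "(j - (j - n) mod j) mod j = n" "(j - (j - n) mod j) mod j = n"
    "(j - n) mod j \<in> prim_idx j" "(j - n) mod j \<in> prim_idx j"
    using prim_idx_reflect[OF n] by auto
  show "root_unity j ((j - n) mod j) powi y = root_unity j n powi - y"
    using n assms by (simp add: prim_idx_def root_unity_reflect power_int_minus power_int_inverse)
qed

lemma prime_radical_circulator_add_multiple:
  assumes "j > 0"
  shows "prime_radical_circulator j (y + int j * c) = prime_radical_circulator j y"
proof -
  have "root_unity j n powi (y + int j * c) = root_unity j n powi y" for n
    using assms by (simp add: power_int_add power_int_mult root_unity_power_self)
  then show ?thesis by (simp add: prime_radical_circulator_def)
qed

lemma root_unity_prim_idx_inj:
  assumes j: "j > 0" "j' > 0" and n: "n \<in> prim_idx j" "n' \<in> prim_idx j'"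
    and eq: "root_unity j n = root_unity j' n'"
  shows "j = j' \<and> n = n'"
proof -
  have n: "coprime n j" "n < j" "coprime n' j'" "n' < j'" using n unfolding prim_idx_def by auto
  \<comment> \<open>a primitive j-th root has order exactly j\<close>
  have "root_unity j (n * j') = 1"
    using eq root_unity_power_self[OF j(2), of n'] by (metis root_unity_power)
  then have "j dvd j'"
    using n(1) j(1) by (simp add: root_unity_eq_1_iff coprime_commute coprime_dvd_mult_right_iff)
  moreover have "root_unity j' (n' * j) = 1"
    using eq root_unity_power_self[OF j(1), of n] by (metis root_unity_power)
  then have "j' dvd j"
    using n(3) j(2) by (simp add: root_unity_eq_1_iff coprime_commute coprime_dvd_mult_right_iff)
  ultimately have "j = j'" by (rule dvd_antisym)
  with eq j n show ?thesis by (simp add: root_unity_eq_iff)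
qed

lemma root_of_unity_eq_root_unity:
  fixes z :: complex
  assumes z: "z ^ c = 1" and c: "c > 0"
  obtains J A where "J dvd c" "A \<in> prim_idx J" "z = root_unity J A"
proof -
  obtain a where a: "a < c" "z = root_unity c a"
    using z complex_roots_unity[of c] c by (auto simp: root_unity_def)
  \<comment> \<open>reduce the fraction a / c to lowest terms A / J\<close>
  define g where "g = gcd a c"
  define J where "J = c div g"
  define A where "A = a div g"
  have g: "g > 0" "c = J * g" "a = A * g" using c by (simp_all add: g_def J_def A_def)
  have "of_nat a / of_nat c = (of_nat A / of_nat J :: complex)"
    using g by (simp add: field_simps)
  then have "z = root_unity J A"
    using a(2) unfolding root_unity_def by (metis times_divide_eq_right)
  moreover have "coprime A J" unfolding A_def J_def g_def using c by (simp add: div_gcd_coprime)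
  moreover have "A < J" using a(1) g by simp
  ultimately show ?thesis using that[of J A] g by (auto simp: prim_idx_def)
qed

section \<open>The Sylvester waves\<close>

definition sylvester_term :: "complex \<Rightarrow> int \<Rightarrow> (nat \<Rightarrow> nat) \<Rightarrow> nat \<Rightarrow> complex \<Rightarrow> complex" where
  "sylvester_term \<rho> s d m t = \<rho> powi (- s) * exp (of_int s * t) /
      (\<Prod>k<m. 1 - \<rho> ^ d k * exp (- of_nat (d k) * t))"

definition sylvester_term_fls :: "complex \<Rightarrow> int \<Rightarrow> (nat \<Rightarrow> nat) \<Rightarrow> nat \<Rightarrow> complex fls" where
  "sylvester_term_fls \<rho> s d m = fls_const (\<rho> powi (- s)) * fls_exp (of_int s) /
      (\<Prod>k<m. 1 - fls_const (\<rho> ^ d k) * fls_exp (- of_nat (d k)))"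

lemma has_laurent_expansion_sylvester_term:
  "sylvester_term \<rho> s d m has_laurent_expansion sylvester_term_fls \<rho> s d m"
  unfolding sylvester_term_def[abs_def] sylvester_term_fls_def
  by (intro laurent_expansion_intros has_laurent_expansion_exp)

lemma sylvester_wave_eq_sum_fls_residue:
  "sylvester_wave j s d m = (\<Sum>n\<in>prim_idx j. fls_residue (sylvester_term_fls (root_unity j n) s d m))"
proof -
  have "(\<lambda>t. \<Sum>n\<in>prim_idx j. sylvester_term (root_unity j n) s d m t) has_laurent_expansion
          (\<Sum>n\<in>prim_idx j. sylvester_term_fls (root_unity j n) s d m)"
    by (intro has_laurent_expansion_sum has_laurent_expansion_sylvester_term)
  from has_laurent_expansion_residue_0[OF this] show ?thesis
    unfolding sylvester_wave_def sylvester_term_def by (simp add: fls_nth_sum)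
qed

lemma inverse_one_minus_root_times_fls_exp:
  fixes a c :: "'a::field_char_0"
  assumes "a ^ j = 1" "j > 0" "c \<noteq> 0"
  shows "inverse (1 - fls_const a * fls_exp (- c)) =
           (\<Sum>r<j. fls_const (a ^ r) * fls_exp (- (of_nat r * c))) *
           inverse (1 - fls_exp (- (of_nat j * c)))"
proof -
  define x where "x = fls_const a * fls_exp (- c)"
  have x_power: "x ^ r = fls_const (a ^ r) * fls_exp (- (of_nat r * c))" for r
    unfolding x_def by (simp add: power_mult_distrib fls_exp_power fls_const_power)
  have "1 - x ^ j = (1 - x) * (\<Sum>r<j. x ^ r)"
    by (rule one_diff_power_eq)
  then have "1 - fls_exp (- (of_nat j * c)) = (1 - x) * (\<Sum>r<j. x ^ r)"
    using x_power[of j] assms(1) by simp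
  moreover have "1 - fls_exp (- (of_nat j * c)) \<noteq> 0"
    using assms by (intro one_minus_fls_exp_nonzero) auto
  ultimately have "1 - x \<noteq> 0" by auto
  with \<open>1 - fls_exp _ = _\<close> \<open>1 - fls_exp _ \<noteq> 0\<close> show ?thesis
    unfolding x_def[symmetric] x_power[symmetric] by (simp add: field_simps)
qed

lemma inverse_one_minus_root_power_fls_exp:
  fixes \<rho> :: "'a::field_char_0"
  assumes "\<rho> ^ j = 1" "j > 0" "e > 0"
  shows "inverse (1 - fls_const (\<rho> ^ e) * fls_exp (- of_nat e)) =
    (if j dvd e then 1 else \<Sum>r<j. fls_const ((\<rho> ^ e) ^ r) * fls_exp (- (of_nat r * of_nat e))) *
    inverse (1 - fls_exp (- of_nat (if j dvd e then e else j * e)))"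
proof (cases "j dvd e")
  case True
  then have "\<rho> ^ e = 1" using assms(1) by (auto simp: power_mult)
  then show ?thesis using True by simp
next
  case False
  have "(\<rho> ^ e) ^ j = 1" using assms(1) by (metis power_mult mult.commute power_one)
  from inverse_one_minus_root_times_fls_exp[OF this assms(2), of "of_nat e"] show ?thesis
    using False assms(3) by (simp add: mult.commute)
qed

lemma sylvester_term_fls_expansion:
  assumes \<rho>: "\<rho> ^ j = 1" and j: "j > 0" and d: "\<And>i. i < m \<Longrightarrow> d i > 0"
  defines "N \<equiv> nondiv_idx j d m"
  shows "sylvester_term_fls \<rho> s d m = (\<Sum>r\<in>PiE N (\<lambda>_. {..<j}).
            fls_const (\<rho> powi (- (s - int (\<Sum>i\<in>N. d i * r i)))) *
            wave1_fls (of_int (s - int (\<Sum>i\<in>N. d i * r i))) (modified_set j d) m)"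
proof -
  define g where "g k = (\<Sum>r<j. fls_const ((\<rho> ^ d k) ^ r) * fls_exp (- (of_nat r * of_nat (d k))))" for k
  define Q :: "complex fls" where "Q = (\<Prod>k<m. inverse (1 - fls_exp (- of_nat (modified_set j d k))))"
  have "\<rho> \<noteq> 0" using \<rho> j by (metis power_0_left zero_neq_one not_gr0)
  have "(\<Prod>k<m. inverse (1 - fls_const (\<rho> ^ d k) * fls_exp (- of_nat (d k)))) =
        (\<Prod>k<m. if \<not> j dvd d k then g k else 1) * Q"
    unfolding Q_def g_def modified_set_def prod.distrib[symmetric]
    using inverse_one_minus_root_power_fls_exp[OF \<rho> j] d by (intro prod.cong) auto
  also have "(\<Prod>k<m. if \<not> j dvd d k then g k else 1) = (\<Prod>k\<in>N. g k)"
    unfolding N_def nondiv_idx_def by (simp add: prod.inter_filter[symmetric])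
  also have "\<dots> = (\<Sum>r\<in>PiE N (\<lambda>_. {..<j}).
                     \<Prod>k\<in>N. fls_const ((\<rho> ^ d k) ^ r k) * fls_exp (- (of_nat (r k) * of_nat (d k))))"
    unfolding g_def by (rule prod_sum_PiE) (auto simp: N_def nondiv_idx_def)
  also have "\<dots> = (\<Sum>r\<in>PiE N (\<lambda>_. {..<j}).
                     fls_const (\<rho> ^ (\<Sum>i\<in>N. d i * r i)) * fls_exp (- of_nat (\<Sum>i\<in>N. d i * r i)))"
  proof (intro sum.cong refl)
    fix r
    have "(\<Prod>k\<in>N. fls_const ((\<rho> ^ d k) ^ r k)) = fls_const (\<rho> ^ (\<Sum>i\<in>N. d i * r i))"
      by (simp add: fls_const_prod power_sum power_mult)
    moreover have "(\<Prod>k\<in>N. fls_exp (- (of_nat (r k) * of_nat (d k)))) =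
        (fls_exp (- of_nat (\<Sum>i\<in>N. d i * r i)) :: complex fls)"
      by (simp add: fls_exp_sum sum_negf[symmetric] mult.commute)
    ultimately show "(\<Prod>k\<in>N. fls_const ((\<rho> ^ d k) ^ r k) * fls_exp (- (of_nat (r k) * of_nat (d k)))) =
        fls_const (\<rho> ^ (\<Sum>i\<in>N. d i * r i)) * fls_exp (- of_nat (\<Sum>i\<in>N. d i * r i))"
      by (simp only: prod.distrib)
  qed
  finally have prod_eq:
    "(\<Prod>k<m. inverse (1 - fls_const (\<rho> ^ d k) * fls_exp (- of_nat (d k)))) = \<dots> * Q" .
  have term_eq: "fls_const (\<rho> powi (- s)) * fls_exp (of_int s) *
        (fls_const (\<rho> ^ R) * fls_exp (- of_nat R)) * Q =
        fls_const (\<rho> powi (- (s - int R))) * wave1_fls (of_int (s - int R)) (modified_set j d) m" for R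
  proof -
    have powi_eq: "\<rho> powi (- (s - int R)) = \<rho> powi (- s) * \<rho> ^ R"
      using power_int_add[of \<rho> "- s" "int R"] \<open>\<rho> \<noteq> 0\<close> by simp
    have exp_eq: "fls_exp (of_real (of_int (s - int R))) = fls_exp (of_int s) * fls_exp (- of_nat R)"
      by (simp flip: fls_exp_add)
    show ?thesis
      unfolding wave1_fls_def Q_def[symmetric] powi_eq exp_eq fls_const_mult_const[symmetric]
      by (simp only: mult_ac)
  qed
  have "sylvester_term_fls \<rho> s d m = fls_const (\<rho> powi (- s)) * fls_exp (of_int s) *
          (\<Prod>k<m. inverse (1 - fls_const (\<rho> ^ d k) * fls_exp (- of_nat (d k))))"
    unfolding sylvester_term_fls_def by (simp add: divide_inverse prod_inversef[symmetric] o_def)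
  also have "\<dots> = (\<Sum>r\<in>PiE N (\<lambda>_. {..<j}). fls_const (\<rho> powi (- s)) * fls_exp (of_int s) *
      (fls_const (\<rho> ^ (\<Sum>i\<in>N. d i * r i)) * fls_exp (- of_nat (\<Sum>i\<in>N. d i * r i))) * Q)"
    by (simp only: prod_eq sum_distrib_left sum_distrib_right mult.assoc)
  finally show ?thesis by (simp only: term_eq)
qed

lemma modified_set_pos: "j > 0 \<Longrightarrow> d i > 0 \<Longrightarrow> modified_set j d i > 0"
  by (simp add: modified_set_def)

lemma sylvester_wave_eq_wave_formula2:
  assumes j: "j > 0" and m: "m > 0" and d: "\<And>i. i < m \<Longrightarrow> d i > 0"
  shows "sylvester_wave j s d m = wave_formula2 j s d m"
proof -
  define N where "N = nondiv_idx j d m"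
  define Y where "Y r = s - int (\<Sum>i\<in>N. d i * r i)" for r
  define w where "w r = (of_real (W1 (of_int (Y r)) (modified_set j d) m) :: complex)" for r
  have "modified_set j d i > 0" if "i < m" for i
    using j d[OF that] by (rule modified_set_pos)
  have "fls_residue (sylvester_term_fls (root_unity j n) s d m) =
          (\<Sum>r\<in>PiE N (\<lambda>_. {..<j}). root_unity j n powi (- Y r) * w r)" for n
    using j d fls_residue_wave1_fls[OF m \<open>\<And>i. i < m \<Longrightarrow> modified_set j d i > 0\<close>]
    by (simp add: sylvester_term_fls_expansion[OF root_unity_power_self] fls_nth_sum
          fls_residue_fls_const_times N_def Y_def w_def)
  then have "sylvester_wave j s d m =
          (\<Sum>r\<in>PiE N (\<lambda>_. {..<j}). (\<Sum>n\<in>prim_idx j. root_unity j n powi (- Y r)) * w r)"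
    by (simp add: sylvester_wave_eq_sum_fls_residue sum_distrib_right sum.swap[of _ "prim_idx j"])
  also have "\<dots> = (\<Sum>r\<in>PiE N (\<lambda>_. {..<j}). prime_radical_circulator j (Y r) * w r)"
    using prime_radical_circulator_uminus[OF j] by (simp only: prime_radical_circulator_def)
  also have "\<dots> = wave_formula2 j s d m"
    by (simp add: wave_formula2_def Let_def N_def Y_def w_def atLeast0LessThan mult.commute)
  finally show ?thesis .
qed

lemma prod_d_modified_set: "prod_d (modified_set j d) m = prod_d d m * j ^ card (nondiv_idx j d m)"
proof -
  have "prod_d (modified_set j d) m = prod_d d m * (\<Prod>i<m. if \<not> j dvd d i then j else 1)"
    by (auto simp: prod_d_def modified_set_def prod.distrib[symmetric] intro!: prod.cong)
  also have "(\<Prod>i<m. if \<not> j dvd d i then j else 1) = j ^ card (nondiv_idx j d m)"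
    by (simp add: nondiv_idx_def prod.inter_filter[symmetric])
  finally show ?thesis .
qed

lemma sum_d_modified_set:
  assumes "j > 0"
  shows "sum_d (modified_set j d) m = sum_d d m + (j - 1) * (\<Sum>i\<in>nondiv_idx j d m. d i)"
proof -
  have "sum_d (modified_set j d) m = sum_d d m + (\<Sum>i<m. if \<not> j dvd d i then (j - 1) * d i else 0)"
    using assms by (auto simp: sum_d_def modified_set_def sum.distrib[symmetric] algebra_simps
        intro!: sum.cong)
  also have "(\<Sum>i<m. if \<not> j dvd d i then (j - 1) * d i else 0) =
             (j - 1) * (\<Sum>i\<in>nondiv_idx j d m. d i)"
    by (simp add: nondiv_idx_def sum.inter_filter[symmetric] sum_distrib_left)
  finally show ?thesis .
qed

definition reflect_digits :: "nat \<Rightarrow> 'a set \<Rightarrow> ('a \<Rightarrow> nat) \<Rightarrow> 'a \<Rightarrow> nat" where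
  "reflect_digits j N r = (\<lambda>i. if i \<in> N then j - 1 - r i else undefined)"

lemma reflect_digits_PiE: "j > 0 \<Longrightarrow> reflect_digits j N r \<in> PiE N (\<lambda>_. {0..<j})"
  unfolding reflect_digits_def by (intro PiE_I) auto

lemma reflect_digits_reflect_digits:
  assumes "r \<in> PiE N (\<lambda>_. {0..<j})"
  shows "reflect_digits j N (reflect_digits j N r) = r"
proof
  fix i show "reflect_digits j N (reflect_digits j N r) i = r i"
  proof (cases "i \<in> N")
    case True
    then have "r i < j" using assms by auto
    then show ?thesis using True by (simp add: reflect_digits_def)
  next
    case False
    then show ?thesis using PiE_arb[OF assms False] by (simp add: reflect_digits_def)
  qed
qed

lemma sum_reflect_digits:
  assumes "r \<in> PiE N (\<lambda>_. {0..<j})"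
  shows "(\<Sum>i\<in>N. d i * reflect_digits j N r i) + (\<Sum>i\<in>N. d i * r i) = (j - 1) * (\<Sum>i\<in>N. d i)"
  unfolding sum.distrib[symmetric] sum_distrib_left
proof (intro sum.cong refl)
  fix i assume "i \<in> N"
  then have "r i < j" using assms by auto
  then have "j - 1 - r i + r i = j - 1" by simp
  then have "d i * (j - 1 - r i) + d i * r i = (j - 1) * d i"
    by (metis distrib_left mult.commute)
  then show "d i * reflect_digits j N r i + d i * r i = (j - 1) * d i"
    using \<open>i \<in> N\<close> by (simp add: reflect_digits_def)
qed

lemma wave_formula1_eq_wave_formula2:
  assumes j: "j > 0"
  shows "wave_formula1 j s d m = wave_formula2 j s d m"
proof -
  define N where "N = nondiv_idx j d m"
  define C :: complex where "C = 1 / (of_real (fact (m - 1)) * of_nat (prod_d d m) * of_nat j ^ card N)"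
  have "wave_formula2 j s d m = (\<Sum>r\<in>PiE N (\<lambda>_. {0..<j}).
      C * (of_real (bernoulli_higher (m - 1)
                    (real_of_int s + real (sum_d d m) + real (\<Sum>i\<in>N. d i * r i))
                    (modified_set j d) m) *
         prime_radical_circulator j (s + int (\<Sum>i\<in>N. d i * (r i + 1)))))"
    unfolding wave_formula2_def Let_def N_def[symmetric]
  proof (rule sum.reindex_bij_witness[of _ "reflect_digits j N" "reflect_digits j N"])
    fix r assume r: "r \<in> PiE N (\<lambda>_. {0..<j})"
    define r' where "r' = reflect_digits j N r"
    define R where "R = (\<Sum>i\<in>N. d i * r i)"
    define D where "D = (\<Sum>i\<in>N. d i)"
    have reflect_sum: "(\<Sum>i\<in>N. d i * r' i) + R = (j - 1) * D"
      unfolding r'_def R_def D_def using r by (rule sum_reflect_digits)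
    have "sum_d (modified_set j d) m = sum_d d m + (j - 1) * D"
      using sum_d_modified_set[OF j] by (simp add: N_def D_def)
    moreover have "real (\<Sum>i\<in>N. d i * r' i) + real R = real ((j - 1) * D)"
      by (simp only: of_nat_add[symmetric] reflect_sum)
    ultimately have arg: "real_of_int s + real (sum_d d m) + real (\<Sum>i\<in>N. d i * r' i) =
               real_of_int (s - int R) + real (sum_d (modified_set j d) m)"
      unfolding of_nat_add of_int_diff of_int_of_nat_eq by linarith
    have "(\<Sum>i\<in>N. d i * (r' i + 1)) = (\<Sum>i\<in>N. d i * r' i) + D"
      by (simp add: D_def sum.distrib)
    with reflect_sum j have "(\<Sum>i\<in>N. d i * (r' i + 1)) + R = j * D"
      by (cases j) auto
    then have "int (\<Sum>i\<in>N. d i * (r' i + 1)) + int R = int j * int D"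
      by (simp only: of_nat_add[symmetric] of_nat_mult[symmetric])
    then have "s + int (\<Sum>i\<in>N. d i * (r' i + 1)) = (s - int R) + int j * int D"
      by linarith
    then have psi: "prime_radical_circulator j (s + int (\<Sum>i\<in>N. d i * (r' i + 1))) =
               prime_radical_circulator j (s - int R)"
      by (simp only: prime_radical_circulator_add_multiple[OF j])
    show "C * (of_real (bernoulli_higher (m - 1)
                    (real_of_int s + real (sum_d d m) + real (\<Sum>i\<in>N. d i * r' i))
                    (modified_set j d) m) *
         prime_radical_circulator j (s + int (\<Sum>i\<in>N. d i * (r' i + 1)))) =
         of_real (W1 (real_of_int (s - int R)) (modified_set j d) m) *
         prime_radical_circulator j (s - int R)"
      unfolding arg psi W1_def C_def prod_d_modified_set N_def[symmetric] by (simp add: field_simps)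
  qed (simp_all add: j reflect_digits_PiE reflect_digits_reflect_digits)
  then show ?thesis
    by (simp add: wave_formula1_def Let_def N_def C_def sum_distrib_left)
qed

section \<open>The partition function as a sum of residues\<close>

definition partition_integrand :: "nat \<Rightarrow> (nat \<Rightarrow> nat) \<Rightarrow> nat \<Rightarrow> complex \<Rightarrow> complex" where
  "partition_integrand s d m z = (\<Prod>k<m. inverse (1 - z ^ d k)) / z ^ Suc s"

lemma residue_partition_integrand_0:
  assumes "\<And>i. i < m \<Longrightarrow> d i > 0"
  shows "residue (partition_integrand s d m) 0 = restricted_partition d m s"
proof -
  have "(\<lambda>z::complex. \<Prod>k<m. inverse (1 - z ^ d k)) has_fps_expansion (\<Prod>k<m. inverse (1 - fps_X ^ d k))"
    using assms by (intro has_fps_expansion_prod has_fps_expansion_inverse fps_expansion_intros) auto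
  from residue_fps_expansion_over_power_at_0[OF this, of s] show ?thesis
    unfolding partition_integrand_def[abs_def] restricted_partition_def by simp
qed

lemma residue_partition_integrand_nonzero:
  assumes p: "p \<noteq> 0"
  shows "residue (partition_integrand s d m) p = - fls_residue (sylvester_term_fls p (int s) d m)"
proof -
  define G where "G = fps_const p * (fps_exp (- 1) - 1)"
  have G: "(\<lambda>t. p * (exp (- t) - 1)) has_fps_expansion G" "G $ 0 = 0" "G $ 1 \<noteq> 0"
    using p unfolding G_def by (auto intro!: fps_expansion_intros)
  have "fps_deriv G = fps_const (- p) * fps_exp (- 1)"
    unfolding G_def by (simp add: fps_exp_deriv)
  then have G': "(\<lambda>t. - p * exp (- t)) has_fps_expansion fps_deriv G"
    by (simp only:) (intro fps_expansion_intros)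
  \<comment> \<open>the substitution z = p e^-t carries the pole at p to t = 0\<close>
  have substituted: "(\<lambda>t. partition_integrand s d m (p + p * (exp (- t) - 1)) * (- p * exp (- t))) =
     (\<lambda>t. - sylvester_term p (int s) d m t)"
  proof
    fix t
    define w where "w = p * exp (- t)"
    have w: "w \<noteq> 0" "p + p * (exp (- t) - 1) = w" using p by (simp_all add: w_def algebra_simps)
    have w_power: "w ^ k = p ^ k * exp (- of_nat k * t)" for k
      unfolding w_def by (simp add: power_mult_distrib exp_of_nat_mult[symmetric])
    have "w ^ s * (p powi (- int s) * exp (of_int (int s) * t)) = 1"
      unfolding w_power using p by (simp add: power_int_minus exp_add[symmetric] field_simps)
    then have w_inverse: "inverse (w ^ s) = p powi (- int s) * exp (of_int (int s) * t)"
      using w(1) by (metis inverse_unique)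
    have "partition_integrand s d m w * (- w) = - ((\<Prod>k<m. inverse (1 - w ^ d k)) * inverse (w ^ s))"
      unfolding partition_integrand_def using w(1) by (simp add: field_simps)
    also have "\<dots> = - sylvester_term p (int s) d m t"
      unfolding sylvester_term_def w_inverse unfolding w_power
      by (simp add: divide_inverse prod_inversef[symmetric] o_def mult_ac)
    finally show "partition_integrand s d m (p + p * (exp (- t) - 1)) * (- p * exp (- t)) =
        - sylvester_term p (int s) d m t" unfolding w(2) by (simp add: w_def)
  qed
  have "(\<lambda>x. partition_integrand s d m (p + x)) has_laurent_expansion
     (\<Prod>k<m. inverse (1 - (fls_const p + fls_X) ^ d k)) / (fls_const p + fls_X) ^ Suc s"
    unfolding partition_integrand_def by (intro laurent_expansion_intros)
  from residue_substitution[OF this G G']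
  have "residue (partition_integrand s d m) p = residue (\<lambda>t. - sylvester_term p (int s) d m t) 0"
    unfolding substituted by simp
  also have "\<dots> = - fls_residue (sylvester_term_fls p (int s) d m)"
    using has_laurent_expansion_residue_0[OF has_laurent_expansion_minus]
      has_laurent_expansion_sylvester_term by simp
  finally show ?thesis .
qed

lemma norm_partition_integrand_le:
  assumes m: "m > 0" and d: "\<And>i. i < m \<Longrightarrow> d i > 0" and z: "norm z \<ge> 2"
  shows "norm (partition_integrand s d m z) \<le> 2 / norm z ^ 2"
proof -
  define r where "r = norm z"
  have "r \<le> r ^ Suc s" using z by (intro self_le_power) (auto simp: r_def)
  have factor: "norm (inverse (1 - z ^ d k)) \<le> 1 / (r - 1)" if "k < m" for k
  proof -
    have "r \<le> r ^ d k" using z d[OF that] by (simp add: r_def self_le_power)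
    also have "\<dots> \<le> norm (1 - z ^ d k) + 1"
      using norm_triangle_ineq2[of "z ^ d k" 1] by (simp add: r_def norm_power norm_minus_commute)
    finally have "r - 1 \<le> norm (1 - z ^ d k)" by simp
    then have "inverse (norm (1 - z ^ d k)) \<le> inverse (r - 1)"
      using z by (intro le_imp_inverse_le) (auto simp: r_def)
    then show ?thesis by (simp add: norm_inverse divide_inverse)
  qed
  have "norm (\<Prod>k<m. inverse (1 - z ^ d k)) \<le> (\<Prod>k<m. 1 / (r - 1))"
    unfolding prod_norm[symmetric] using factor by (intro prod_mono) auto
  also have "\<dots> = (1 / (r - 1)) ^ m" by simp
  also have "\<dots> \<le> (1 / (r - 1)) ^ 1"
    using m z by (intro power_decreasing) (auto simp: r_def field_simps)
  finally have "norm (partition_integrand s d m z) \<le> 1 / (r - 1) / r ^ Suc s"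
    unfolding partition_integrand_def norm_divide norm_power r_def
    using z by (intro divide_right_mono) auto
  also have "\<dots> \<le> 1 / (r - 1) / r"
    using z \<open>r \<le> r ^ Suc s\<close>
    by (intro divide_left_mono) (auto simp: r_def intro!: mult_pos_pos simp del: power_Suc)
  also have "\<dots> \<le> 2 / r ^ 2"
    using z by (simp add: r_def divide_simps power2_eq_square)
  finally show ?thesis by (simp add: r_def)
qed

lemma finite_wave_indices:
  assumes "\<And>i. i < m \<Longrightarrow> d i > 0"
  shows "finite (wave_indices d m)"
proof (rule finite_subset)
  show "wave_indices d m \<subseteq> {..sum_d d m}"
  proof
    fix j assume "j \<in> wave_indices d m"
    then obtain i where i: "i < m" "j dvd d i" unfolding wave_indices_def by auto
    then have "j \<le> d i" using assms[OF i(1)] by (simp add: dvd_imp_le)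
    also have "d i \<le> sum_d d m" unfolding sum_d_def using i(1) by (intro member_le_sum) auto
    finally show "j \<in> {..sum_d d m}" by simp
  qed
qed auto

definition wave_roots :: "(nat \<Rightarrow> nat) \<Rightarrow> nat \<Rightarrow> complex set" where
  "wave_roots d m = (\<lambda>(j, n). root_unity j n) ` (SIGMA j:wave_indices d m. prim_idx j)"

lemma partition_integrand_holomorphic:
  assumes d: "\<And>i. i < m \<Longrightarrow> d i > 0"
  shows "partition_integrand s d m holomorphic_on UNIV - insert 0 (wave_roots d m)"
proof -
  have "1 - z ^ d k \<noteq> 0" if z: "z \<notin> wave_roots d m" and k: "k < m" for z k
  proof
    assume "1 - z ^ d k = 0"
    then obtain J A where "J dvd d k" "A \<in> prim_idx J" "z = root_unity J A"
      using root_of_unity_eq_root_unity[of z "d k"] d[OF k] by auto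
    moreover from this have "J \<in> wave_indices d m"
      using k d[OF k] by (auto simp: wave_indices_def intro: Nat.gr0I)
    ultimately have "z \<in> wave_roots d m" by (force simp: wave_roots_def)
    with z show False by contradiction
  qed
  then show ?thesis
    unfolding partition_integrand_def[abs_def] by (intro holomorphic_intros) auto
qed

lemma finite_wave_roots:
  assumes "\<And>i. i < m \<Longrightarrow> d i > 0"
  shows "finite (wave_roots d m)"
  using finite_wave_indices[of m d, OF assms] by (simp add: wave_roots_def prim_idx_def)

lemma norm_wave_roots: "p \<in> wave_roots d m \<Longrightarrow> norm p = 1"
  by (auto simp: wave_roots_def)

lemma sum_residues_wave_roots:
  assumes d: "\<And>i. i < m \<Longrightarrow> d i > 0"
  shows "(\<Sum>p\<in>wave_roots d m. residue (partition_integrand s d m) p) =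
           - (\<Sum>j\<in>wave_indices d m. sylvester_wave j (int s) d m)"
proof -
  define W where "W = wave_indices d m"
  have finW: "finite W" unfolding W_def by (rule finite_wave_indices[of m d, OF d])
  have fin_prim: "finite (prim_idx j)" for j by (simp add: prim_idx_def)
  have "inj_on (\<lambda>(j, n). root_unity j n) (SIGMA j:W. prim_idx j)"
    by (auto simp: W_def wave_indices_def intro!: inj_onI dest: root_unity_prim_idx_inj)
  then have "(\<Sum>p\<in>wave_roots d m. residue (partition_integrand s d m) p) =
      (\<Sum>(j, n)\<in>(SIGMA j:W. prim_idx j). residue (partition_integrand s d m) (root_unity j n))"
    unfolding wave_roots_def W_def[symmetric] by (subst sum.reindex) (simp_all add: case_prod_unfold)
  also have "\<dots> = (\<Sum>(j, n)\<in>(SIGMA j:W. prim_idx j).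
                     - fls_residue (sylvester_term_fls (root_unity j n) (int s) d m))"
    by (intro sum.cong refl) (auto simp: residue_partition_integrand_nonzero)
  also have "\<dots> = - (\<Sum>j\<in>W. \<Sum>n\<in>prim_idx j.
                       fls_residue (sylvester_term_fls (root_unity j n) (int s) d m))"
    by (simp add: sum.Sigma[OF finW] fin_prim sum_negf case_prod_unfold)
  finally show ?thesis by (simp add: W_def sylvester_wave_eq_sum_fls_residue)
qed

lemma restricted_partition_eq_sum_sylvester_wave:
  assumes m: "m > 0" and d: "\<And>i. i < m \<Longrightarrow> d i > 0"
  shows "restricted_partition d m s = (\<Sum>j\<in>wave_indices d m. sylvester_wave j (int s) d m)"
proof -
  define f where "f = partition_integrand s d m"
  have "(\<Sum>p\<in>insert 0 (wave_roots d m). residue f p) = 0"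
  proof (rule sum_residues_eq_0_if_decay)
    show "finite (insert 0 (wave_roots d m))" using finite_wave_roots[OF d] by simp
    show "f holomorphic_on UNIV - insert 0 (wave_roots d m)"
      unfolding f_def by (rule partition_integrand_holomorphic[OF d])
    show "insert 0 (wave_roots d m) \<subseteq> ball 0 2" using norm_wave_roots by fastforce
    show "norm (f z) \<le> 2 / norm z ^ 2" if "norm z \<ge> 2" for z
      unfolding f_def using m d that by (rule norm_partition_integrand_le)
  qed
  moreover have "0 \<notin> wave_roots d m" using norm_wave_roots by force
  ultimately have "residue f 0 + (\<Sum>p\<in>wave_roots d m. residue f p) = 0"
    using finite_wave_roots[OF d] by simp
  then show ?thesis
    using residue_partition_integrand_0[OF d] sum_residues_wave_roots[OF d] by (simp add: f_def)
qed

theorem mainTheorem1: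
  fixes d :: "nat \<Rightarrow> nat" and m :: nat and s :: nat
  assumes "m \<ge> 1"
    and "\<And>i. i < m \<Longrightarrow> d i > 0"
  shows "restricted_partition d m s = (\<Sum>j\<in>wave_indices d m. sylvester_wave j (int s) d m)
    \<and> (\<forall>j\<in>wave_indices d m.
          sylvester_wave j (int s) d m = wave_formula1 j (int s) d m
        \<and> sylvester_wave j (int s) d m = wave_formula2 j (int s) d m)"
proof (intro conjI ballI)
  have m: "m > 0" using assms(1) by simp
  show "restricted_partition d m s = (\<Sum>j\<in>wave_indices d m. sylvester_wave j (int s) d m)"
    using restricted_partition_eq_sum_sylvester_wave[OF m assms(2)] .
  fix j assume "j \<in> wave_indices d m"
  then have j: "j > 0" by (simp add: wave_indices_def)
  show "sylvester_wave j (int s) d m = wave_formula2 j (int s) d m"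
    using sylvester_wave_eq_wave_formula2[OF j m assms(2)] .
  then show "sylvester_wave j (int s) d m = wave_formula1 j (int s) d m"
    using wave_formula1_eq_wave_formula2[OF j] by simp
qed

end
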